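(* Assume the two-layer linear setting below, Assumptions (A3) and (A4), $\lambda_1\ge2\lambda_2$, and the learning-rate condition $\eta<\frac{nd}{(d+1)\lambda_1}$. Let $c_5$ be a constant with $0<c_5<\min\{2\beta,\frac{d}{d+1}\}$, and suppose $$m>\frac{3\eta c_2}{\frac{2d}{d+1}-2c_5}\quad\text{and}\quad m>\frac{\eta c_2}{2\beta-c_5}.$$ Then there is a constant $C$, depending only on $c_5$, $\eta$ and $\lambda_1/n$, such that $\|D(t)\|\le C\sqrt{nm}$ for all $t$.
   Context: Two-layer linear setting. Let $m$ be even and let $d,n\ge1$. The data matrix is $X=[x_1,\dots,x_n]\in\mathbb R^{d\times n}$ and the labels are $Y\in\{-1,1\}^n$, so that $\|Y\|=\sqrt n$. The network is $f(x)=\frac1{\sqrt m}A^\top Wx$ with $A\in\mathbb R^m$ and $W\in\mathbb R^{m\times d}$, trained by gradient descent $$A(t+1)=A(t)-\tfrac{2\eta}{n\sqrt m}W(t)XD(t),\qquad W(t+1)=W(t)-\tfrac{2\eta}{n\sqrt m}A(t)D(t)^\top X^\top$$ from the symmetric initialization, which satisfies $W(0)^\top W(0)=\frac md I_d$ and $F(0)=0$. Here $F=\frac1{\sqrt m}X^\top W^\top A$ is the output vector and $D=F-Y$ the residual. Define the Gram matrix $M(t)=\frac{2}{mn}\big(\|A(t)\|^2X^\top X+X^\top W(t)^\top W(t)X\big)$, the sharpness $\Lambda(t)=\lambda_{\max}(M(t))$, and $\Gamma(t)=\frac{2}{mn}\big(X^\top W(t)^\top W(t)X-\frac md X^\top X\big)$.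 $X^\top X$ has eigenvalues $\lambda_1\ge\lambda_2\ge\dots$, and $\lambda_1=\Theta(n)$. (A3): there is a constant $c_2>0$ with $\|\Gamma(t)\|\le c_2/m$ for all $t$. (A4): there is a constant $\beta>0$ with $\Lambda(t)\le\frac4\eta(1-\beta)$ for all $t$. *)

theory Defs
  imports "Jordan_Normal_Form.Matrix" "Jordan_Normal_Form.Char_Poly"
          "HOL-Computational_Algebra.Polynomial" "HOL-Library.Multiset"
begin

definition eigs_desc :: "real mat \<Rightarrow> real list" where
  "eigs_desc A = rev (sorted_list_of_multiset (proots (char_poly A)))"

(* k-th largest eigenvalue, 1-based: lam A 1 \<ge> lam A 2 \<ge> ...; 0 if k is out of range *)
definition lam :: "real mat \<Rightarrow> nat \<Rightarrow> real" where
  "lam A k = (if 1 \<le> k \<and> k \<le> length (eigs_desc A) then eigs_desc A ! (k - 1) else 0)"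

definition lambda_max :: "real mat \<Rightarrow> real" where
  "lambda_max A = lam A 1"

definition vnorm :: "real vec \<Rightarrow> real" where
  "vnorm v = sqrt (v \<bullet> v)"

definition opnorm :: "real mat \<Rightarrow> real" where
  "opnorm A = Sup {vnorm (A *\<^sub>v v) | v. v \<in> carrier_vec (dim_col A) \<and> vnorm v \<le> 1}"

definition outer :: "real vec \<Rightarrow> real vec \<Rightarrow> real mat" where
  "outer a b = mat (dim_vec a) (dim_vec b) (\<lambda>(i, j). a $ i * b $ j)"

definition Fout :: "nat \<Rightarrow> real mat \<Rightarrow> real mat \<Rightarrow> real vec \<Rightarrow> real vec" where
  "Fout m X W A = (1 / sqrt (real m)) \<cdot>\<^sub>v (transpose_mat X * transpose_mat W *\<^sub>v A)"

definition Resid :: "nat \<Rightarrow> real mat \<Rightarrow> real vec \<Rightarrow> real mat \<Rightarrow> real vec \<Rightarrow> real vec" where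
  "Resid m X Y W A = Fout m X W A - Y"

definition GramM :: "nat \<Rightarrow> nat \<Rightarrow> real mat \<Rightarrow> real mat \<Rightarrow> real vec \<Rightarrow> real mat" where
  "GramM m n X W A = (2 / (real m * real n)) \<cdot>\<^sub>m
     ((vnorm A)\<^sup>2 \<cdot>\<^sub>m (transpose_mat X * X) + transpose_mat X * transpose_mat W * W * X)"

definition GammaM :: "nat \<Rightarrow> nat \<Rightarrow> nat \<Rightarrow> real mat \<Rightarrow> real mat \<Rightarrow> real mat" where
  "GammaM m n d X W = (2 / (real m * real n)) \<cdot>\<^sub>m
     (transpose_mat X * transpose_mat W * W * X - (real m / real d) \<cdot>\<^sub>m (transpose_mat X * X))"

end

theory Submission
  imports Defs
begin

text \<open>Only the sharpness bound (A4) is needed. Since the quadratic form of \<open>M\<close> is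
  \<open>2/(mn) (\<parallel>A\<parallel>\<^sup>2 \<parallel>Xv\<parallel>\<^sup>2 + \<parallel>WXv\<parallel>\<^sup>2)\<close>, the Rayleigh bound \<open>v\<^sup>T M v \<le> \<lambda>\<^sub>m\<^sub>a\<^sub>x(M) \<parallel>v\<parallel>\<^sup>2 \<le> 4/\<eta> \<parallel>v\<parallel>\<^sup>2\<close>
  gives \<open>\<parallel>WX\<parallel>\<^sup>2 \<le> K\<close> and, at a top eigenvector of \<open>X\<^sup>TX\<close>, \<open>\<parallel>A\<parallel>\<^sup>2 \<lambda>\<^sub>1 \<le> K\<close>, where \<open>K = 2mn/\<eta>\<close>.
  Hence \<open>\<parallel>F\<parallel> = \<parallel>(WX)\<^sup>TA\<parallel>/\<surd>m \<le> K/\<surd>(\<lambda>\<^sub>1 m) = 2\<surd>(nm)/(\<eta>\<surd>(\<lambda>\<^sub>1/n))\<close> and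
  \<open>\<parallel>D\<parallel> \<le> \<parallel>F\<parallel> + \<parallel>Y\<parallel> = \<parallel>F\<parallel> + \<surd>n\<close>, so \<open>C(c\<^sub>5, \<eta>, r) = 2/(\<eta>\<surd>r) + 1\<close> works
  (and \<open>C = 1\<close> when \<open>\<lambda>\<^sub>1 \<le> 0\<close>, which forces \<open>X = 0\<close>). The Rayleigh bound for symmetric
  matrices is obtained by showing that the supremum of the Rayleigh quotient is an eigenvalue.\<close>

lemma scalar_prod_self_nonneg: "0 \<le> (v::real vec) \<bullet> v"
  using conjugate_square_ge_0_vec[of v] by simp

lemma scalar_prod_self_eq_0_iff:
  "(v::real vec) \<in> carrier_vec n \<Longrightarrow> v \<bullet> v = 0 \<longleftrightarrow> v = 0\<^sub>v n"
  using conjugate_square_eq_0_vec[of v n] by simp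

lemma vnorm_nonneg: "0 \<le> vnorm v"
  unfolding vnorm_def using scalar_prod_self_nonneg by simp

lemma vnorm_power2: "(vnorm v)\<^sup>2 = v \<bullet> v"
  unfolding vnorm_def using scalar_prod_self_nonneg by simp

lemma vnorm_smult: "vnorm (c \<cdot>\<^sub>v v) = \<bar>c\<bar> * vnorm (v::real vec)"
proof -
  have "(c \<cdot>\<^sub>v v) \<bullet> (c \<cdot>\<^sub>v v) = c\<^sup>2 * (v \<bullet> v)"
    by (simp add: power2_eq_square)
  thus ?thesis unfolding vnorm_def by (simp add: real_sqrt_mult)
qed

lemma scalar_prod_Cauchy_Schwarz:
  fixes v w :: "real vec"
  assumes "v \<in> carrier_vec n" "w \<in> carrier_vec n"
  shows "\<bar>v \<bullet> w\<bar> \<le> vnorm v * vnorm w"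
proof -
  define a b c where "a = w \<bullet> w" and "b = v \<bullet> w" and "c = v \<bullet> v"
  have "0 \<le> (a \<cdot>\<^sub>v v - b \<cdot>\<^sub>v w) \<bullet> (a \<cdot>\<^sub>v v - b \<cdot>\<^sub>v w)"
    by (rule scalar_prod_self_nonneg)
  also have "\<dots> = a * (a * c - b\<^sup>2)"
    using assms unfolding a_def b_def c_def
    by (simp add: minus_scalar_prod_distrib[of _ n] scalar_prod_minus_distrib[of _ n]
        comm_scalar_prod[of w n v] power2_eq_square algebra_simps)
  finally have "0 \<le> a * (a * c - b\<^sup>2)" .
  moreover have "a = 0 \<Longrightarrow> b = 0"
    using assms scalar_prod_self_eq_0_iff[of w n] unfolding a_def b_def by simp
  ultimately have "b\<^sup>2 \<le> c * a"
    using scalar_prod_self_nonneg[of w] unfolding a_def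
    by (cases "a = 0") (auto simp: zero_le_mult_iff mult.commute)
  hence "sqrt (b\<^sup>2) \<le> sqrt (c * a)" by (rule real_sqrt_le_mono)
  thus ?thesis unfolding a_def b_def c_def vnorm_def by (simp add: real_sqrt_mult)
qed

lemma vnorm_diff_le:
  fixes v w :: "real vec"
  assumes "v \<in> carrier_vec n" "w \<in> carrier_vec n"
  shows "vnorm (v - w) \<le> vnorm v + vnorm w"
proof -
  have "(vnorm (v - w))\<^sup>2 = v \<bullet> v - 2 * (v \<bullet> w) + w \<bullet> w"
    using assms by (simp add: vnorm_power2 minus_scalar_prod_distrib[of _ n]
        scalar_prod_minus_distrib[of _ n] comm_scalar_prod[of w n v])
  also have "\<dots> \<le> (vnorm v + vnorm w)\<^sup>2"
    using scalar_prod_Cauchy_Schwarz[OF assms] by (simp add: power2_sum vnorm_power2)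
  finally show ?thesis by (rule power2_le_imp_le) (simp add: vnorm_nonneg)
qed

lemma scalar_prod_transpose_mat:
  fixes B :: "'a :: comm_semiring_0 mat"
  assumes B: "B \<in> carrier_mat r c" and y: "y \<in> carrier_vec c" and u: "u \<in> carrier_vec r"
  shows "y \<bullet> (transpose_mat B *\<^sub>v u) = (B *\<^sub>v y) \<bullet> u"
  using transpose_vec_mult_scalar[OF B y u] comm_scalar_prod[of y c] comm_scalar_prod[of u r] B y u
  by simp

lemma smult_mat_mult_vec:
  "B \<in> carrier_mat r c \<Longrightarrow> v \<in> carrier_vec c \<Longrightarrow> ((k::real) \<cdot>\<^sub>m B) *\<^sub>v v = k \<cdot>\<^sub>v (B *\<^sub>v v)"
  by (intro eq_vecI) (auto simp: scalar_prod_def sum_distrib_left algebra_simps)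

definition frobenius_sq :: "real mat \<Rightarrow> real" where
  "frobenius_sq B = (\<Sum>i<dim_row B. row B i \<bullet> row B i)"

lemma frobenius_sq_nonneg: "0 \<le> frobenius_sq B"
  unfolding frobenius_sq_def by (auto intro: sum_nonneg scalar_prod_self_nonneg)

lemma mult_mat_vec_self_le_frobenius_sq:
  assumes B: "B \<in> carrier_mat r c" and x: "x \<in> carrier_vec c"
  shows "(B *\<^sub>v x) \<bullet> (B *\<^sub>v x) \<le> frobenius_sq B * (x \<bullet> x)"
proof -
  have "(B *\<^sub>v x) \<bullet> (B *\<^sub>v x) = (\<Sum>i<r. (row B i \<bullet> x)\<^sup>2)"
    using B x by (auto simp: scalar_prod_def[of "B *\<^sub>v x"] power2_eq_square atLeast0LessThan)
  also have "\<dots> \<le> (\<Sum>i<r. (vnorm (row B i) * vnorm x)\<^sup>2)"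
  proof (intro sum_mono)
    fix i assume "i \<in> {..<r}"
    hence "\<bar>row B i \<bullet> x\<bar> \<le> \<bar>vnorm (row B i) * vnorm x\<bar>"
      using B x scalar_prod_Cauchy_Schwarz[of "row B i" c x] by auto
    thus "(row B i \<bullet> x)\<^sup>2 \<le> (vnorm (row B i) * vnorm x)\<^sup>2"
      by (simp only: abs_le_square_iff)
  qed
  also have "\<dots> = frobenius_sq B * (x \<bullet> x)"
    using B by (simp add: frobenius_sq_def sum_distrib_right power_mult_distrib vnorm_power2)
  finally show ?thesis .
qed

lemma quadratic_form_abs_le_frobenius:
  assumes B: "B \<in> carrier_mat n n" and x: "x \<in> carrier_vec n"
  shows "\<bar>x \<bullet> (B *\<^sub>v x)\<bar> \<le> sqrt (frobenius_sq B) * (x \<bullet> x)"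
proof -
  have "vnorm (B *\<^sub>v x) \<le> sqrt (frobenius_sq B) * vnorm x"
    using mult_mat_vec_self_le_frobenius_sq[OF B x] unfolding vnorm_def
    by (metis real_sqrt_le_mono real_sqrt_mult)
  hence "vnorm x * vnorm (B *\<^sub>v x) \<le> sqrt (frobenius_sq B) * (x \<bullet> x)"
    using vnorm_nonneg[of x] mult_left_mono
    by (fastforce simp: vnorm_power2[symmetric] power2_eq_square ac_simps)
  moreover have "\<bar>x \<bullet> (B *\<^sub>v x)\<bar> \<le> vnorm x * vnorm (B *\<^sub>v x)"
    using B x by (intro scalar_prod_Cauchy_Schwarz[of _ n]) auto
  ultimately show ?thesis by linarith
qed

lemma eigenvalue_le_lam:
  assumes N: "(N::real mat) \<in> carrier_mat n n" and ev: "eigenvalue N l"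
  shows "l \<le> lam N 1"
proof -
  define L where "L = sorted_list_of_multiset (proots (char_poly N))"
  have "char_poly N \<noteq> 0" using degree_monic_char_poly[OF N] by auto
  moreover have "poly (char_poly N) l = 0" using eigenvalue_root_char_poly[OF N] ev by simp
  ultimately have "l \<in> set L" unfolding L_def by simp
  then obtain i where i: "i < length L" "L ! i = l" by (auto simp: in_set_conv_nth)
  have "L ! i \<le> L ! (length L - 1)"
    using i unfolding L_def by (intro sorted_nth_mono) auto
  moreover have "rev L ! 0 = L ! (length L - 1)" using i by (subst rev_nth) auto
  ultimately show ?thesis using i unfolding lam_def eigs_desc_def L_def[symmetric] by simp
qed

lemma lam_eigenvalue:
  assumes N: "(N::real mat) \<in> carrier_mat n n" and nz: "lam N 1 \<noteq> 0"
  shows "eigenvalue N (lam N 1)"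
proof -
  have "char_poly N \<noteq> 0" using degree_monic_char_poly[OF N] by auto
  moreover have "lam N 1 \<in> set (eigs_desc N)"
    using nz unfolding lam_def by (auto split: if_splits intro!: nth_mem)
  ultimately have "poly (char_poly N) (lam N 1) = 0" unfolding eigs_desc_def by simp
  thus ?thesis using eigenvalue_root_char_poly[OF N] by simp
qed

text \<open>Test the nonpositivity of the form at \<open>y + s K y\<close> with \<open>s = 1/(\<parallel>K\<parallel>\<^sub>F + 1)\<close>.\<close>
lemma neg_semidef_image_le:
  assumes K: "(K::real mat) \<in> carrier_mat n n"
    and sym: "\<And>y z. y \<in> carrier_vec n \<Longrightarrow> z \<in> carrier_vec n \<Longrightarrow> y \<bullet> (K *\<^sub>v z) = z \<bullet> (K *\<^sub>v y)"
    and nsd: "\<And>y. y \<in> carrier_vec n \<Longrightarrow> y \<bullet> (K *\<^sub>v y) \<le> 0"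
    and y: "y \<in> carrier_vec n"
  shows "(K *\<^sub>v y) \<bullet> (K *\<^sub>v y) \<le> (sqrt (frobenius_sq K) + 1) * - (y \<bullet> (K *\<^sub>v y))"
proof -
  define c where "c = sqrt (frobenius_sq K)"
  define z where "z = K *\<^sub>v y"
  define s where "s = 1 / (c + 1)"
  have c0: "0 \<le> c" unfolding c_def using frobenius_sq_nonneg by simp
  have z: "z \<in> carrier_vec n" unfolding z_def using K y by simp
  have "(y + s \<cdot>\<^sub>v z) \<bullet> (K *\<^sub>v (y + s \<cdot>\<^sub>v z))
      = y \<bullet> (K *\<^sub>v y) + 2 * s * (z \<bullet> z) + s\<^sup>2 * (z \<bullet> (K *\<^sub>v z))"
    using y z K sym[OF y z]
    by (simp add: mult_add_distrib_mat_vec[of _ n n] mult_mat_vec[OF K z]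
        add_scalar_prod_distrib[of _ n] scalar_prod_add_distrib[of _ n]
        z_def[symmetric] power2_eq_square algebra_simps)
  moreover have "(y + s \<cdot>\<^sub>v z) \<bullet> (K *\<^sub>v (y + s \<cdot>\<^sub>v z)) \<le> 0" using y z by (intro nsd) auto
  moreover have "- (c * (z \<bullet> z)) \<le> z \<bullet> (K *\<^sub>v z)"
    using quadratic_form_abs_le_frobenius[OF K z] unfolding c_def by simp
  moreover have "s\<^sup>2 * - (c * (z \<bullet> z)) \<le> s\<^sup>2 * (z \<bullet> (K *\<^sub>v z))"
    using calculation(3) by (rule mult_left_mono) simp
  ultimately have "y \<bullet> (K *\<^sub>v y) + 2 * s * (z \<bullet> z) - s\<^sup>2 * c * (z \<bullet> z) \<le> 0"
    by simp
  moreover have "s\<^sup>2 * c * (z \<bullet> z) \<le> s * (z \<bullet> z)"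
  proof -
    have "s * c \<le> 1" "0 \<le> s" using c0 unfolding s_def by (auto simp: field_simps)
    hence "s * (s * c) * (z \<bullet> z) \<le> s * 1 * (z \<bullet> z)"
      by (intro mult_right_mono mult_left_mono scalar_prod_self_nonneg)
    thus ?thesis by (simp add: power2_eq_square mult.assoc)
  qed
  ultimately have "s * (z \<bullet> z) \<le> - (y \<bullet> (K *\<^sub>v y))" by linarith
  hence "(c + 1) * (s * (z \<bullet> z)) \<le> (c + 1) * - (y \<bullet> (K *\<^sub>v y))"
    using c0 by (intro mult_left_mono) auto
  thus ?thesis using c0 unfolding s_def c_def z_def by simp
qed

lemma char_matrix_left_inverse:
  assumes N: "(N::'a::field mat) \<in> carrier_mat n n" and not_ev: "\<not> eigenvalue N l"
  shows "\<exists>B \<in> carrier_mat n n. B * char_matrix N l = 1\<^sub>m n"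
proof -
  have K: "char_matrix N l \<in> carrier_mat n n" using N by simp
  have "det (char_matrix N l) \<noteq> 0"
  proof
    assume "det (char_matrix N l) = 0"
    then obtain v where "v \<in> carrier_vec n" "v \<noteq> 0\<^sub>v n" "char_matrix N l *\<^sub>v v = 0\<^sub>v n"
      using det_0_iff_vec_prod_zero[OF K] by auto
    hence "eigenvector N v l" using eigenvector_char_matrix[OF N] by auto
    thus False using not_ev unfolding eigenvalue_def by auto
  qed
  from det_non_zero_imp_unit[OF K this, unfolded Units_def, of "()"]
  show ?thesis by (auto simp: ring_mat_def)
qed

lemma rayleigh_sup_eigenvalue:
  assumes N: "(N::real mat) \<in> carrier_mat n n"
    and sym: "\<And>y z. y \<in> carrier_vec n \<Longrightarrow> z \<in> carrier_vec n \<Longrightarrow> y \<bullet> (N *\<^sub>v z) = z \<bullet> (N *\<^sub>v y)"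
    and upper: "\<And>y. y \<in> carrier_vec n \<Longrightarrow> y \<bullet> (N *\<^sub>v y) \<le> l * (y \<bullet> y)"
    and approx: "\<And>e. e > 0 \<Longrightarrow> \<exists>y \<in> carrier_vec n. y \<bullet> y = 1 \<and> l - e < y \<bullet> (N *\<^sub>v y)"
  shows "eigenvalue N l"
proof (rule ccontr)
  txt \<open>Otherwise \<open>K = N - l\<close> has an inverse \<open>B\<close>, and at unit vectors \<open>y\<close> with \<open>y\<^sup>TNy\<close> close to \<open>l\<close>
    the bound \<open>1 = \<parallel>BKy\<parallel>\<^sup>2 \<le> \<parallel>B\<parallel>\<^sub>F\<^sup>2 \<parallel>Ky\<parallel>\<^sup>2 \<le> \<parallel>B\<parallel>\<^sub>F\<^sup>2 (\<parallel>K\<parallel>\<^sub>F + 1)(l - y\<^sup>TNy)\<close> fails.\<close>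
  assume not_ev: "\<not> eigenvalue N l"
  define K where "K = char_matrix N l"
  have K: "K \<in> carrier_mat n n" unfolding K_def using N by simp
  have Kq: "y \<bullet> (K *\<^sub>v z) = y \<bullet> (N *\<^sub>v z) - l * (y \<bullet> z)"
    if "y \<in> carrier_vec n" "z \<in> carrier_vec n" for y z
    using that N unfolding K_def char_matrix_def
    by (simp add: add_mult_distrib_mat_vec[of _ n n] smult_mat_mult_vec[of _ n n]
        scalar_prod_add_distrib[of _ n])
  have Ksym: "y \<bullet> (K *\<^sub>v z) = z \<bullet> (K *\<^sub>v y)" if "y \<in> carrier_vec n" "z \<in> carrier_vec n" for y z
    using Kq[OF that] Kq[OF that(2,1)] sym[OF that] comm_scalar_prod[OF that] by simp
  have Knsd: "y \<bullet> (K *\<^sub>v y) \<le> 0" if "y \<in> carrier_vec n" for y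
    using Kq[OF that that] upper[OF that] by simp
  obtain B where B: "B \<in> carrier_mat n n" "B * K = 1\<^sub>m n"
    using char_matrix_left_inverse[OF N not_ev] unfolding K_def by blast
  define c where "c = sqrt (frobenius_sq K) + 1"
  define b where "b = frobenius_sq B + 1"
  have c0: "0 < c" and b0: "0 < b"
    unfolding b_def c_def using frobenius_sq_nonneg[of B] frobenius_sq_nonneg[of K] by (auto simp: add_nonneg_pos)
  obtain y where y: "y \<in> carrier_vec n" "y \<bullet> y = 1" "l - 1 / (b * c) < y \<bullet> (N *\<^sub>v y)"
    using approx[of "1 / (b * c)"] b0 c0 by auto
  have "B *\<^sub>v (K *\<^sub>v y) = y"
    using B K y(1) by (simp add: assoc_mult_mat_vec[symmetric, of B n n K n])
  hence "1 \<le> b * ((K *\<^sub>v y) \<bullet> (K *\<^sub>v y))"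
    using mult_mat_vec_self_le_frobenius_sq[OF B(1), of "K *\<^sub>v y"] y(2) K y(1)
      scalar_prod_self_nonneg[of "K *\<^sub>v y"] unfolding b_def by (simp add: algebra_simps)
  also have "\<dots> \<le> b * (c * - (y \<bullet> (K *\<^sub>v y)))"
    using neg_semidef_image_le[OF K Ksym Knsd y(1)] b0 unfolding c_def
    by (intro mult_left_mono) auto
  also have "\<dots> < b * (c * (1 / (b * c)))"
    using Kq[OF y(1) y(1)] y b0 c0 by (intro mult_strict_left_mono) auto
  finally show False using b0 c0 by simp
qed

lemma quadratic_form_le_lam:
  assumes N: "(N::real mat) \<in> carrier_mat n n"
    and sym: "\<And>y z. y \<in> carrier_vec n \<Longrightarrow> z \<in> carrier_vec n \<Longrightarrow> y \<bullet> (N *\<^sub>v z) = z \<bullet> (N *\<^sub>v y)"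
    and x: "x \<in> carrier_vec n"
  shows "x \<bullet> (N *\<^sub>v x) \<le> lam N 1 * (x \<bullet> x)"
proof (cases "n = 0")
  case True
  thus ?thesis using x N by (simp add: scalar_prod_def)
next
  case False
  define S where "S = {y \<bullet> (N *\<^sub>v y) | y. y \<in> carrier_vec n \<and> y \<bullet> y = 1}"
  define l where "l = Sup S"
  have "unit_vec n 0 \<bullet> unit_vec n 0 = (1::real)" using False by simp
  hence S_ne: "S \<noteq> {}" unfolding S_def by (auto intro!: exI[of _ "unit_vec n 0"])
  have "bdd_above S"
    using quadratic_form_abs_le_frobenius[OF N]
    by (intro bdd_aboveI[of _ "sqrt (frobenius_sq N)"]) (fastforce simp: S_def)
  have upper: "y \<bullet> (N *\<^sub>v y) \<le> l * (y \<bullet> y)" if y: "y \<in> carrier_vec n" for y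
  proof (cases "y = 0\<^sub>v n")
    case True thus ?thesis using N by simp
  next
    case False
    hence pos: "0 < y \<bullet> y"
      using scalar_prod_self_nonneg[of y] scalar_prod_self_eq_0_iff[OF y] by simp
    define u where "u = (1 / sqrt (y \<bullet> y)) \<cdot>\<^sub>v y"
    have "u \<bullet> u = 1" "u \<bullet> (N *\<^sub>v u) = y \<bullet> (N *\<^sub>v y) / (y \<bullet> y)"
      unfolding u_def using y pos N by (simp_all add: mult_mat_vec[OF N y])
    moreover have "u \<in> carrier_vec n" unfolding u_def using y by simp
    ultimately have "y \<bullet> (N *\<^sub>v y) / (y \<bullet> y) \<in> S" unfolding S_def by force
    hence "y \<bullet> (N *\<^sub>v y) / (y \<bullet> y) \<le> l" unfolding l_def using \<open>bdd_above S\<close> by (rule cSup_upper)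
    thus ?thesis using pos by (simp add: divide_le_eq mult.commute)
  qed
  have approx: "\<exists>y \<in> carrier_vec n. y \<bullet> y = 1 \<and> l - e < y \<bullet> (N *\<^sub>v y)" if "e > 0" for e
    using less_cSup_iff[OF S_ne \<open>bdd_above S\<close>, of "l - e"] that unfolding l_def S_def by auto
  have "l \<le> lam N 1"
    by (rule eigenvalue_le_lam[OF N rayleigh_sup_eigenvalue[OF N sym upper approx]])
  thus ?thesis using upper[OF x] scalar_prod_self_nonneg[of x] by (meson mult_right_mono order_trans)
qed

lemma scalar_prod_gram:
  assumes X: "(X::real mat) \<in> carrier_mat d n" and y: "y \<in> carrier_vec n" and z: "z \<in> carrier_vec n"
  shows "y \<bullet> ((transpose_mat X * X) *\<^sub>v z) = (X *\<^sub>v y) \<bullet> (X *\<^sub>v z)"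
  using X y z by (simp add: assoc_mult_mat_vec[of _ n d X n] scalar_prod_transpose_mat[of X d n])

lemma vnorm_transpose_mult_le:
  fixes B :: "real mat"
  assumes B: "B \<in> carrier_mat r c" and u: "u \<in> carrier_vec r" and K: "0 \<le> K"
    and bound: "\<And>v. v \<in> carrier_vec c \<Longrightarrow> (B *\<^sub>v v) \<bullet> (B *\<^sub>v v) \<le> K * (v \<bullet> v)"
  shows "vnorm (transpose_mat B *\<^sub>v u) \<le> sqrt K * vnorm u"
proof -
  define z where "z = transpose_mat B *\<^sub>v u"
  have z: "z \<in> carrier_vec c" unfolding z_def using B u by simp
  have Bz: "vnorm (B *\<^sub>v z) \<le> sqrt K * vnorm z"
    using bound[OF z] unfolding vnorm_def by (metis real_sqrt_le_mono real_sqrt_mult)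
  have "vnorm z * vnorm z = (B *\<^sub>v z) \<bullet> u"
    unfolding z_def using scalar_prod_transpose_mat[OF B z[unfolded z_def] u]
    by (simp add: vnorm_power2[symmetric] power2_eq_square)
  also have "\<dots> \<le> vnorm (B *\<^sub>v z) * vnorm u"
    using B z u scalar_prod_Cauchy_Schwarz[of "B *\<^sub>v z" r u] by simp
  also have "\<dots> \<le> vnorm z * (sqrt K * vnorm u)"
    using mult_right_mono[OF Bz vnorm_nonneg[of u]] by (simp add: ac_simps)
  finally have "vnorm z * vnorm z \<le> vnorm z * (sqrt K * vnorm u)" .
  thus ?thesis
    using vnorm_nonneg[of z] K vnorm_nonneg[of u] unfolding z_def[symmetric]
    by (cases "vnorm z = 0") auto
qed

lemma mult_lam_gram_le:
  assumes X: "(X::real mat) \<in> carrier_mat d n" and nz: "lam (transpose_mat X * X) 1 \<noteq> 0"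
    and bound: "\<And>v. v \<in> carrier_vec n \<Longrightarrow> a * ((X *\<^sub>v v) \<bullet> (X *\<^sub>v v)) \<le> K * (v \<bullet> v)"
  shows "a * lam (transpose_mat X * X) 1 \<le> K"
proof -
  let ?G = "transpose_mat X * X" and ?l = "lam (transpose_mat X * X) 1"
  have G: "?G \<in> carrier_mat n n" using X by simp
  obtain u where u: "u \<in> carrier_vec n" "u \<noteq> 0\<^sub>v n" "?G *\<^sub>v u = ?l \<cdot>\<^sub>v u"
    using lam_eigenvalue[OF G nz] G unfolding eigenvalue_def eigenvector_def by auto
  have "(X *\<^sub>v u) \<bullet> (X *\<^sub>v u) = ?l * (u \<bullet> u)"
    using scalar_prod_gram[OF X u(1) u(1)] u by simp
  hence "(a * ?l) * (u \<bullet> u) \<le> K * (u \<bullet> u)" using bound[OF u(1)] by (simp add: mult.assoc)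
  moreover have "0 < u \<bullet> u"
    using u scalar_prod_self_nonneg[of u] scalar_prod_self_eq_0_iff[of u n] by fastforce
  ultimately show ?thesis by simp
qed

lemma gram_lam_nonpos_imp_zero:
  assumes X: "(X::real mat) \<in> carrier_mat d n" and l: "lam (transpose_mat X * X) 1 \<le> 0"
    and v: "v \<in> carrier_vec n"
  shows "X *\<^sub>v v = 0\<^sub>v d"
proof -
  have G: "transpose_mat X * X \<in> carrier_mat n n" using X by simp
  have "(X *\<^sub>v v) \<bullet> (X *\<^sub>v v) \<le> lam (transpose_mat X * X) 1 * (v \<bullet> v)"
    using quadratic_form_le_lam[OF G _ v] scalar_prod_gram[OF X] scalar_prod_gram[OF X v v]
      comm_scalar_prod[of "X *\<^sub>v _" d "X *\<^sub>v _"] X by fastforce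
  also have "\<dots> \<le> 0" using l scalar_prod_self_nonneg[of v] by (simp add: mult_nonpos_nonneg)
  finally show ?thesis
    using X v scalar_prod_self_nonneg[of "X *\<^sub>v v"] scalar_prod_self_eq_0_iff[of "X *\<^sub>v v" d] by simp
qed

lemma GramM_carrier:
  "X \<in> carrier_mat d n \<Longrightarrow> W \<in> carrier_mat m d \<Longrightarrow> GramM m n X W A \<in> carrier_mat n n"
  unfolding GramM_def by (intro smult_carrier_mat add_carrier_mat mult_carrier_mat) auto

lemma scalar_prod_GramM:
  assumes X: "X \<in> carrier_mat d n" and W: "W \<in> carrier_mat m d"
    and y: "y \<in> carrier_vec n" and z: "z \<in> carrier_vec n"
  shows "y \<bullet> (GramM m n X W A *\<^sub>v z) = 2 / (real m * real n) *
     ((vnorm A)\<^sup>2 * ((X *\<^sub>v y) \<bullet> (X *\<^sub>v z)) + (W *\<^sub>v (X *\<^sub>v y)) \<bullet> (W *\<^sub>v (X *\<^sub>v z)))"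
proof -
  let ?G = "transpose_mat X * X" and ?H = "transpose_mat X * transpose_mat W * W * X"
  have G: "?G \<in> carrier_mat n n" and H: "?H \<in> carrier_mat n n" using X W by auto
  have XW: "transpose_mat X * transpose_mat W \<in> carrier_mat n m" using X W by simp
  have "?H *\<^sub>v z = (transpose_mat X * transpose_mat W * W) *\<^sub>v (X *\<^sub>v z)"
    using XW W by (intro assoc_mult_mat_vec[OF _ X z]) (rule mult_carrier_mat)
  also have "\<dots> = (transpose_mat X * transpose_mat W) *\<^sub>v (W *\<^sub>v (X *\<^sub>v z))"
    using X z by (intro assoc_mult_mat_vec[OF XW W]) simp
  also have "\<dots> = transpose_mat X *\<^sub>v (transpose_mat W *\<^sub>v (W *\<^sub>v (X *\<^sub>v z)))"
    using X W z by (intro assoc_mult_mat_vec) auto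
  finally have Hq: "y \<bullet> (?H *\<^sub>v z) = (W *\<^sub>v (X *\<^sub>v y)) \<bullet> (W *\<^sub>v (X *\<^sub>v z))"
    using X W y z by (simp add: scalar_prod_transpose_mat[of X d n] scalar_prod_transpose_mat[of W m d])
  have "GramM m n X W A *\<^sub>v z
      = (2 / (real m * real n)) \<cdot>\<^sub>v ((vnorm A)\<^sup>2 \<cdot>\<^sub>v (?G *\<^sub>v z) + ?H *\<^sub>v z)"
    unfolding GramM_def using G H z
    by (simp add: smult_mat_mult_vec[of _ n n] add_mult_distrib_mat_vec[of _ n n])
  thus ?thesis using G H y z scalar_prod_gram[OF X y z] Hq
    by (simp add: scalar_prod_add_distrib[of _ n])
qed

lemma GramM_quadratic_form_le:
  assumes X: "X \<in> carrier_mat d n" and W: "W \<in> carrier_mat m d" and v: "v \<in> carrier_vec n"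
    and m: "0 < m" and n: "0 < n" and \<eta>: "0 < \<eta>"
    and sharp: "lambda_max (GramM m n X W A) \<le> 4 / \<eta>"
  shows "(vnorm A)\<^sup>2 * ((X *\<^sub>v v) \<bullet> (X *\<^sub>v v)) + (W *\<^sub>v (X *\<^sub>v v)) \<bullet> (W *\<^sub>v (X *\<^sub>v v))
      \<le> 2 * real m * real n / \<eta> * (v \<bullet> v)"
    (is "?q \<le> _")
proof -
  have sym: "y \<bullet> (GramM m n X W A *\<^sub>v z) = z \<bullet> (GramM m n X W A *\<^sub>v y)"
    if "y \<in> carrier_vec n" "z \<in> carrier_vec n" for y z
    using that X W scalar_prod_GramM[OF X W] comm_scalar_prod[of "X *\<^sub>v y" d "X *\<^sub>v z"]
      comm_scalar_prod[of "W *\<^sub>v (X *\<^sub>v y)" m "W *\<^sub>v (X *\<^sub>v z)"] by simp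
  have "2 / (real m * real n) * ?q = v \<bullet> (GramM m n X W A *\<^sub>v v)"
    using scalar_prod_GramM[OF X W v v] by simp
  also have "\<dots> \<le> lambda_max (GramM m n X W A) * (v \<bullet> v)"
    unfolding lambda_max_def by (rule quadratic_form_le_lam[OF GramM_carrier[OF X W] sym v])
  also have "\<dots> \<le> 4 / \<eta> * (v \<bullet> v)"
    using sharp scalar_prod_self_nonneg[of v] by (rule mult_right_mono)
  finally show ?thesis using m n \<eta> by (simp add: field_simps)
qed

lemma vnorm_transpose_mult_le_lam:
  assumes X: "(X::real mat) \<in> carrier_mat d n" and W: "W \<in> carrier_mat m d"
    and A: "A \<in> carrier_vec m" and l: "0 < lam (transpose_mat X * X) 1"
    and quad: "\<And>v. v \<in> carrier_vec n \<Longrightarrow>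
      (vnorm A)\<^sup>2 * ((X *\<^sub>v v) \<bullet> (X *\<^sub>v v)) + ((W * X) *\<^sub>v v) \<bullet> ((W * X) *\<^sub>v v) \<le> K * (v \<bullet> v)"
  shows "vnorm (transpose_mat (W * X) *\<^sub>v A) \<le> K / sqrt (lam (transpose_mat X * X) 1)"
proof -
  define l where "l = lam (transpose_mat X * X) 1"
  have "(vnorm A)\<^sup>2 * ((X *\<^sub>v v) \<bullet> (X *\<^sub>v v)) \<le> K * (v \<bullet> v)"
    and WX_bound: "((W * X) *\<^sub>v v) \<bullet> ((W * X) *\<^sub>v v) \<le> K * (v \<bullet> v)" if "v \<in> carrier_vec n" for v
    using quad[OF that] scalar_prod_self_nonneg[of "X *\<^sub>v v"] scalar_prod_self_nonneg[of "(W * X) *\<^sub>v v"]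
    by (auto intro: order_trans[rotated])
  hence "(vnorm A)\<^sup>2 * l \<le> K" unfolding l_def using l by (intro mult_lam_gram_le[OF X]) auto
  hence "vnorm A \<le> sqrt (K / l)"
    using l vnorm_nonneg[of A] unfolding l_def by (simp add: le_divide_eq real_le_rsqrt)
  moreover have K: "0 \<le> K"
    using \<open>(vnorm A)\<^sup>2 * l \<le> K\<close> l unfolding l_def by (smt (verit) zero_le_power2 mult_nonneg_nonneg)
  ultimately have "vnorm (transpose_mat (W * X) *\<^sub>v A) \<le> sqrt K * sqrt (K / l)"
    using vnorm_transpose_mult_le[of "W * X" m n A K] W X A WX_bound
    by (smt (verit) mult_left_mono real_sqrt_ge_zero mult_carrier_mat)
  also have "sqrt K * sqrt (K / l) = K / sqrt l"
    using K l unfolding l_def by (simp add: real_sqrt_divide real_sqrt_mult[symmetric])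
  finally show ?thesis unfolding l_def .
qed

lemma vnorm_Fout_le:
  assumes X: "X \<in> carrier_mat d n" and W: "W \<in> carrier_mat m d" and A: "A \<in> carrier_vec m"
    and m: "0 < m" and n: "0 < n" and \<eta>: "0 < \<eta>"
    and sharp: "lambda_max (GramM m n X W A) \<le> 4 / \<eta>"
  shows "vnorm (Fout m X W A)
    \<le> (if 0 < lam (transpose_mat X * X) 1 / n
        then 2 / (\<eta> * sqrt (lam (transpose_mat X * X) 1 / n)) else 0) * sqrt (real n * real m)"
proof -
  define l where "l = lam (transpose_mat X * X) 1"
  define K where "K = 2 * real m * real n / \<eta>"
  have WX: "W * X \<in> carrier_mat m n" using W X by simp
  have WXv: "(W * X) *\<^sub>v v = W *\<^sub>v (X *\<^sub>v v)" if "v \<in> carrier_vec n" for v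
    using W X that by (rule assoc_mult_mat_vec)
  have F: "Fout m X W A = (1 / sqrt m) \<cdot>\<^sub>v (transpose_mat (W * X) *\<^sub>v A)"
    unfolding Fout_def using transpose_mult[OF W X] by simp
  show ?thesis
  proof (cases "0 < l")
    case True
    have "vnorm (transpose_mat (W * X) *\<^sub>v A) \<le> K / sqrt l"
      using GramM_quadratic_form_le[OF X W _ m n \<eta> sharp] WXv True unfolding K_def l_def
      by (intro vnorm_transpose_mult_le_lam[OF X W A]) auto
    hence "vnorm (Fout m X W A) \<le> K / sqrt l / sqrt m"
      unfolding F vnorm_smult using m divide_right_mono[of _ "K / sqrt l" "sqrt m"]
      by (simp add: divide_divide_eq_left)
    also have "K / sqrt l / sqrt m = 2 / (\<eta> * sqrt (l / n)) * sqrt (real n * real m)"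
      unfolding K_def using m n True \<eta>
      by (simp add: real_sqrt_divide real_sqrt_mult field_simps)
    finally show ?thesis using True n unfolding l_def by simp
  next
    case False
    have "W *\<^sub>v 0\<^sub>v d = 0\<^sub>v m" using W by (intro eq_vecI) (auto simp: row_def)
    hence "vnorm (transpose_mat (W * X) *\<^sub>v A) \<le> sqrt 0 * vnorm A"
      using gram_lam_nonpos_imp_zero[OF X] False W WXv unfolding l_def
      by (intro vnorm_transpose_mult_le[OF WX A]) auto
    thus ?thesis using False n vnorm_nonneg[of "Fout m X W A"] unfolding F vnorm_smult l_def
      by (simp add: divide_le_0_iff zero_less_divide_iff)
  qed
qed

lemma vnorm_sign_vector:
  assumes "Y \<in> carrier_vec n" and "\<forall>i<n. Y $ i = 1 \<or> Y $ i = -1"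
  shows "vnorm Y = sqrt n"
proof -
  have "Y \<bullet> Y = (\<Sum>i<n. 1)"
    using assms unfolding scalar_prod_def by (intro sum.cong) (auto simp: atLeast0LessThan)
  thus ?thesis unfolding vnorm_def by simp
qed

lemma vnorm_Resid_le:
  assumes X: "X \<in> carrier_mat d n" and Y: "Y \<in> carrier_vec n"
    and Y_sign: "\<forall>i<n. Y $ i = 1 \<or> Y $ i = -1"
    and W: "W \<in> carrier_mat m d" and A: "A \<in> carrier_vec m"
    and m: "0 < m" and n: "0 < n" and \<eta>: "0 < \<eta>"
    and sharp: "lambda_max (GramM m n X W A) \<le> 4 / \<eta>"
  shows "vnorm (Resid m X Y W A)
    \<le> (if 0 < lam (transpose_mat X * X) 1 / n
        then 2 / (\<eta> * sqrt (lam (transpose_mat X * X) 1 / n)) + 1 else 1) * sqrt (real n * real m)"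
proof -
  have R: "vnorm (Resid m X Y W A) \<le> vnorm (Fout m X W A) + sqrt n"
    unfolding Resid_def using vnorm_diff_le[of _ n Y] vnorm_sign_vector[OF Y Y_sign] X W A Y
    by (simp add: Fout_def)
  have S: "sqrt n \<le> sqrt (real n * real m)"
    using m by (intro real_sqrt_le_mono) (simp add: mult_le_cancel_left1)
  note F = vnorm_Fout_le[OF X W A m n \<eta> sharp]
  show ?thesis
  proof (cases "0 < lam (transpose_mat X * X) 1 / n")
    case True
    from R S F show ?thesis unfolding if_P[OF True] distrib_right by linarith
  next
    case False
    from R S F show ?thesis unfolding if_not_P[OF False] by linarith
  qed
qed

lemma gd_iterates_carrier:
  assumes X: "X \<in> carrier_mat d n" and Y: "Y \<in> carrier_vec n"
    and A0: "A 0 \<in> carrier_vec m" and W0: "W 0 \<in> carrier_mat m d"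
    and A_step: "\<forall>t. A (Suc t) = A t - c \<cdot>\<^sub>v (W t * X *\<^sub>v Resid m X Y (W t) (A t))"
    and W_step: "\<forall>t. W (Suc t) = W t - c \<cdot>\<^sub>m (outer (A t) (Resid m X Y (W t) (A t)) * transpose_mat X)"
  shows "A t \<in> carrier_vec m \<and> W t \<in> carrier_mat m d"
proof (induction t)
  case 0
  show ?case using A0 W0 by simp
next
  case (Suc t)
  hence "A t \<in> carrier_vec m" "W t \<in> carrier_mat m d" by auto
  moreover have "Resid m X Y (W t) (A t) \<in> carrier_vec n"
    unfolding Resid_def Fout_def using X Y calculation by auto
  ultimately show ?case using A_step W_step X by (auto simp: outer_def)
qed

lemma vnorm_Resid_gd_le:
  fixes X :: "real mat" and A :: "nat \<Rightarrow> real vec" and W :: "nat \<Rightarrow> real mat"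
  assumes n: "n \<ge> 1"
    and X: "X \<in> carrier_mat d n" and Y: "Y \<in> carrier_vec n"
    and Y_sign: "\<forall>i<n. Y $ i = 1 \<or> Y $ i = -1"
    and A0: "A 0 \<in> carrier_vec m" and W0: "W 0 \<in> carrier_mat m d"
    and A_step: "\<forall>t. A (Suc t) = A t - (2 * \<eta> / (real n * sqrt (real m))) \<cdot>\<^sub>v
                          (W t * X *\<^sub>v Resid m X Y (W t) (A t))"
    and W_step: "\<forall>t. W (Suc t) = W t - (2 * \<eta> / (real n * sqrt (real m))) \<cdot>\<^sub>m
                          (outer (A t) (Resid m X Y (W t) (A t)) * transpose_mat X)"
    and \<eta>: "\<eta> > 0" and c2: "c2 > 0" and \<beta>: "\<beta> > 0"
    and sharp: "\<forall>t. lambda_max (GramM m n X (W t) (A t)) \<le> 4 / \<eta> * (1 - \<beta>)"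
    and c5: "c5 < 2 * \<beta>" and m_large: "real m > \<eta> * c2 / (2 * \<beta> - c5)"
  shows "vnorm (Resid m X Y (W t) (A t))
    \<le> (if 0 < lam (transpose_mat X * X) 1 / n
        then 2 / (\<eta> * sqrt (lam (transpose_mat X * X) 1 / n)) + 1 else 1) * sqrt (real n * real m)"
proof -
  have "0 < \<eta> * c2 / (2 * \<beta> - c5)" using \<eta> c2 c5 by simp
  hence m: "0 < m" using m_large by linarith
  have "lambda_max (GramM m n X (W t) (A t)) \<le> 4 / \<eta>"
    using sharp \<eta> \<beta> by (smt (verit) divide_pos_pos mult_left_le)
  thus ?thesis
    using vnorm_Resid_le[OF X Y Y_sign _ _ m _ \<eta>] gd_iterates_carrier[OF X Y A0 W0 A_step W_step] n
    by simp
qed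

theorem mainTheorem7:
  "\<exists>C :: real \<Rightarrow> real \<Rightarrow> real \<Rightarrow> real.
    \<forall>(m::nat) (d::nat) (n::nat) (X::real mat) (Y::real vec)
      (A::nat \<Rightarrow> real vec) (W::nat \<Rightarrow> real mat) (\<eta>::real) (\<beta>::real) (c2::real) (c5::real).
     even m \<and> d \<ge> 1 \<and> n \<ge> 1 \<and>
     X \<in> carrier_mat d n \<and> Y \<in> carrier_vec n \<and> (\<forall>i<n. Y $ i = 1 \<or> Y $ i = -1) \<and>
     A 0 \<in> carrier_vec m \<and> W 0 \<in> carrier_mat m d \<and>
     (\<forall>t. A (Suc t) = A t - (2 * \<eta> / (real n * sqrt (real m))) \<cdot>\<^sub>v
                          (W t * X *\<^sub>v Resid m X Y (W t) (A t))) \<and>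
     (\<forall>t. W (Suc t) = W t - (2 * \<eta> / (real n * sqrt (real m))) \<cdot>\<^sub>m
                          (outer (A t) (Resid m X Y (W t) (A t)) * transpose_mat X)) \<and>
     transpose_mat (W 0) * W 0 = (real m / real d) \<cdot>\<^sub>m 1\<^sub>m d \<and>
     Fout m X (W 0) (A 0) = 0\<^sub>v n \<and>
     \<eta> > 0 \<and>
     c2 > 0 \<and> (\<forall>t. opnorm (GammaM m n d X (W t)) \<le> c2 / real m) \<and>
     \<beta> > 0 \<and> (\<forall>t. lambda_max (GramM m n X (W t) (A t)) \<le> 4 / \<eta> * (1 - \<beta>)) \<and>
     lam (transpose_mat X * X) 1 \<ge> 2 * lam (transpose_mat X * X) 2 \<and>
     \<eta> * (real d + 1) * lam (transpose_mat X * X) 1 < real n * real d \<and>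
     0 < c5 \<and> c5 < 2 * \<beta> \<and> c5 < real d / (real d + 1) \<and>
     real m > 3 * \<eta> * c2 / (2 * real d / (real d + 1) - 2 * c5) \<and>
     real m > \<eta> * c2 / (2 * \<beta> - c5)
     \<longrightarrow> (\<forall>t. vnorm (Resid m X Y (W t) (A t))
              \<le> C c5 \<eta> (lam (transpose_mat X * X) 1 / real n) * sqrt (real n * real m))"
  by (intro exI[of _ "\<lambda>_ \<eta> r. if 0 < r then 2 / (\<eta> * sqrt r) + 1 else 1"] allI impI,
      elim conjE, rule vnorm_Resid_gd_le) assumption+

end
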